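(* The function $\rho^*(p)$ is strictly decreasing in $p$ on $(0,1]$.
   Context: Let $f(z)=\sqrt{2/\pi}\,e^{-z^2/2}$ for $z\ge 0$. For $p\in(0,1]$, $z^*(p)>0$ is the number satisfying $\int_0^{z^*}x^pf(x)\,dx=\int_{z^*}^\infty x^pf(x)\,dx$, and $\rho^*(p)=1-\operatorname{erf}(z^*(p)/\sqrt2)$. *)

theory Defs
  imports "HOL-Analysis.Analysis"
begin

definition hn_dens :: "real \<Rightarrow> real" where
  "hn_dens z = sqrt (2 / pi) * exp (- (z\<^sup>2) / 2)"

definition erf :: "real \<Rightarrow> real" where
  "erf x = 2 / sqrt pi * integral {0..x} (\<lambda>t. exp (- (t\<^sup>2)))"

definition zstar :: "real \<Rightarrow> real" where
  "zstar p = (THE z. z > 0 \<and>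
      integral {0..z} (\<lambda>x. x powr p * hn_dens x) = integral {z..} (\<lambda>x. x powr p * hn_dens x))"

definition rhostar :: "real \<Rightarrow> real" where
  "rhostar p = 1 - erf (zstar p / sqrt 2)"

end

theory Submission
  imports Defs
begin

(* Write g_p(x) = x^p f(x) for the p-th moment integrand of the half-normal density f.
   Since erf is strictly increasing on [0,oo), it suffices to show that z*(p) is
   strictly increasing in p.  The file proceeds as follows.
   1. Basic analysis of g_p: positivity, continuity, domination by C e^(-x), hence
      integrability on every [a,oo), and the splitting of the total moment at z.
   2. A general fact: the integral of a continuous function that is positive inside
      [a,b] is positive.  It gives strict growth of the partial moment
      G_p(z) = int_0^z g_p, and later strict growth of erf.
   3. Existence (intermediate value theorem plus the exponential tail bound) and
      uniqueness (strict growth of G_p) of the balance point, so zstar p is the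
      balance point for every p in (0,1].
   4. Comparison: for p < q, g_q = x^(q-p) g_p puts relatively more mass beyond z*(p),
      so at z = z*(p) the q-moment is tail-heavy; since the head G_q grows and the
      tail shrinks in z, the balance point of q lies strictly to the right of z*(p). *)

text \<open>The integral of a continuous function that is positive on the open interval is
  positive: its indefinite integral has positive derivative inside the interval.\<close>
lemma integral_pos_if_pos_inside:
  fixes f :: "real \<Rightarrow> real"
  assumes "a < b" and cont: "continuous_on {a..b} f"
    and pos: "\<And>x. a < x \<Longrightarrow> x < b \<Longrightarrow> f x > 0"
  shows "integral {a..b} f > 0"
proof -
  define F where "F u = integral {a..u} f" for u
  have "F a < F b"
  proof (rule DERIV_pos_imp_increasing_open[OF \<open>a < b\<close>])
    fix x assume x: "a < x" "x < b"
    have "(F has_real_derivative f x) (at x within {a..b})"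
      unfolding F_def using cont x by (intro integral_has_real_derivative) auto
    then have "(F has_real_derivative f x) (at x)"
      using x by (simp add: at_within_Icc_at)
    then show "\<exists>y. (F has_real_derivative y) (at x) \<and> y > 0"
      using pos[OF x] by blast
  next
    show "continuous_on {a..b} F"
      unfolding F_def using cont
      by (intro indefinite_integral_continuous_1 integrable_continuous_interval)
  qed
  then show ?thesis unfolding F_def by simp
qed

definition moment_dens :: "real \<Rightarrow> real \<Rightarrow> real" where
  "moment_dens p x = x powr p * hn_dens x"

lemma hn_dens_pos: "hn_dens x > 0"
  unfolding hn_dens_def by simp

lemma moment_dens_nonneg: "moment_dens p x \<ge> 0"
  unfolding moment_dens_def using hn_dens_pos[of x] by simp

lemma moment_dens_pos: "x > 0 \<Longrightarrow> moment_dens p x > 0"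
  unfolding moment_dens_def using hn_dens_pos[of x] by simp

lemma moment_dens_shift: "moment_dens (p + d) x = x powr d * moment_dens p x"
  unfolding moment_dens_def by (simp add: powr_add)

lemma moment_dens_continuous:
  assumes "p > 0"
  shows "continuous_on {0..} (moment_dens p)"
proof -
  have "continuous_on {0..} (\<lambda>x::real. x powr p)"
    by (rule continuous_on_powr') (use assms in \<open>auto intro!: continuous_intros\<close>)
  then show ?thesis
    unfolding moment_dens_def hn_dens_def by (auto intro!: continuous_intros)
qed

lemma moment_dens_integrable_Icc:
  assumes "0 \<le> a" "p > 0"
  shows "moment_dens p integrable_on {a..b}"
  using assms
  by (intro integrable_continuous_interval continuous_on_subset[OF moment_dens_continuous]) auto

text \<open>For exponents up to 1 the integrand is dominated by a fixed multiple of e^(-x):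
  use x^p \<le> e^x and -x^2/2 \<le> 2 - 2x.\<close>
definition moment_bound_const :: real where
  "moment_bound_const = sqrt (2 / pi) * exp 2"

lemma moment_dens_le_exp:
  assumes "0 \<le> x" "0 < p" "p \<le> 1"
  shows "moment_dens p x \<le> moment_bound_const * exp (- x)"
proof -
  have pow: "x powr p \<le> exp x"
  proof (cases "x \<le> 1")
    case True
    then have "x powr p \<le> 1" using assms by (intro powr_le1) auto
    also have "1 \<le> exp x" using assms by simp
    finally show ?thesis .
  next
    case False
    then have "x powr p \<le> x powr 1" using assms by (intro powr_mono) auto
    also have "\<dots> \<le> exp x" using assms by (simp add: order_trans[OF _ exp_ge_add_one_self])
    finally show ?thesis .
  qed
  have "- (x\<^sup>2) / 2 \<le> 2 - 2 * x"
    using zero_le_power2[of "x - 2"] by (simp add: power2_eq_square algebra_simps)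
  then have gauss: "exp (- (x\<^sup>2) / 2) \<le> exp (2 - 2 * x)" by simp
  have "moment_dens p x = sqrt (2 / pi) * (x powr p * exp (- (x\<^sup>2) / 2))"
    unfolding moment_dens_def hn_dens_def by simp
  also have "\<dots> \<le> sqrt (2 / pi) * (exp x * exp (2 - 2 * x))"
    by (intro mult_left_mono mult_mono pow gauss) auto
  also have "exp x * exp (2 - 2 * x) = exp 2 * exp (- x)"
    by (simp add: exp_add[symmetric])
  finally show ?thesis by (simp add: moment_bound_const_def mult.assoc)
qed

lemma exp_minus_integrable: "(\<lambda>x. c * exp (- x)) integrable_on {a::real..}"
  using integrable_on_cmult_left[OF integrable_on_exp_minus_to_infinity[of 1 a], of c] by simp

lemma moment_dens_integrable:
  assumes "0 \<le> a" "0 < p" "p \<le> 1"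
  shows "moment_dens p integrable_on {a..}"
proof (rule measurable_bounded_by_integrable_imp_integrable_real)
  show "moment_dens p \<in> borel_measurable (lebesgue_on {a..})"
    using assms
    by (intro continuous_imp_measurable_on_sets_lebesgue
        continuous_on_subset[OF moment_dens_continuous]) auto
  show "(\<lambda>x. moment_bound_const * exp (- x)) integrable_on {a..}"
    by (rule exp_minus_integrable)
  show "\<bar>moment_dens p x\<bar> \<le> moment_bound_const * exp (- x)" if "x \<in> {a..}" for x
    using moment_dens_le_exp[of x p] moment_dens_nonneg[of p x] assms that by auto
qed auto

lemma moment_tail_le_exp:
  assumes "0 \<le> z" "0 < p" "p \<le> 1"
  shows "integral {z..} (moment_dens p) \<le> moment_bound_const * exp (- z)"
proof -
  have "integral {z..} (moment_dens p) \<le> integral {z..} (\<lambda>x. moment_bound_const * exp (- x))"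
    using assms moment_dens_le_exp[of _ p]
    by (intro integral_le moment_dens_integrable exp_minus_integrable) auto
  also have "\<dots> = moment_bound_const * exp (- z)"
    using integral_unique[OF has_integral_exp_minus_to_infinity[of 1 z]] by simp
  finally show ?thesis .
qed

lemma moment_integral_split:
  assumes "0 \<le> z" "0 < p" "p \<le> 1"
  shows "integral {0..} (moment_dens p)
           = integral {0..z} (moment_dens p) + integral {z..} (moment_dens p)"
proof -
  have "{0..} = {0..z} \<union> {z..}" "{0..z} \<inter> {z..} = {z}" using assms by auto
  then show ?thesis
    using integral_Un[of "moment_dens p" "{0..z}" "{z..}"]
      moment_dens_integrable_Icc[of 0 p z] moment_dens_integrable[of z p] assms
    by simp
qed

lemma partial_moment_strict_mono:
  assumes "0 \<le> a" "a < b" "0 < p"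
  shows "integral {0..a} (moment_dens p) < integral {0..b} (moment_dens p)"
proof -
  have "integral {a..b} (moment_dens p) > 0"
    using assms moment_dens_pos[of _ p]
    by (intro integral_pos_if_pos_inside continuous_on_subset[OF moment_dens_continuous]) auto
  moreover have "integral {0..b} (moment_dens p)
                   = integral {0..a} (moment_dens p) + integral {a..b} (moment_dens p)"
    using assms moment_dens_integrable_Icc[of 0 p b]
    by (intro Henstock_Kurzweil_Integration.integral_combine[symmetric]) auto
  ultimately show ?thesis by simp
qed

definition balance_point :: "real \<Rightarrow> real \<Rightarrow> bool" where
  "balance_point p z \<longleftrightarrow>
     z > 0 \<and> integral {0..z} (moment_dens p) = integral {z..} (moment_dens p)"

lemma balance_point_iff_half:
  assumes "0 < p" "p \<le> 1"
  shows "balance_point p z \<longleftrightarrow>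
           z > 0 \<and> 2 * integral {0..z} (moment_dens p) = integral {0..} (moment_dens p)"
  unfolding balance_point_def using moment_integral_split[of z p] assms by auto

lemma balance_point_exists:
  assumes "0 < p" "p \<le> 1"
  shows "\<exists>z. balance_point p z"
proof -
  define I where "I = integral {0..} (moment_dens p)"
  define C where "C = moment_bound_const"
  have C: "C > 0" unfolding C_def moment_bound_const_def by simp
  have "integral {0..1} (moment_dens p) > 0"
    using assms moment_dens_pos[of _ p]
    by (intro integral_pos_if_pos_inside continuous_on_subset[OF moment_dens_continuous]) auto
  moreover have "integral {1..} (moment_dens p) \<ge> 0"
    using assms moment_dens_nonneg by (intro integral_nonneg moment_dens_integrable) auto
  ultimately have I: "I > 0"
    unfolding I_def using moment_integral_split[of 1 p] assms by simp
  text \<open>Choose z1 so large that the tail beyond z1 is at most I/4.\<close>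
  define z1 where "z1 = max 1 (ln (4 * C / I))"
  have z1: "z1 \<ge> 1" unfolding z1_def by simp
  have "exp (- z1) \<le> exp (- ln (4 * C / I))" unfolding z1_def by simp
  also have "\<dots> = I / (4 * C)" using C I by (simp add: exp_minus)
  finally have "C * exp (- z1) \<le> I / 4" using C by (simp add: field_simps)
  then have "integral {z1..} (moment_dens p) \<le> I / 4"
    using moment_tail_le_exp[of z1 p] z1 assms unfolding C_def by simp
  then have head: "I / 2 \<le> integral {0..z1} (moment_dens p)"
    using moment_integral_split[of z1 p] assms z1 I unfolding I_def by linarith
  have "\<exists>z. 0 \<le> z \<and> z \<le> z1 \<and> integral {0..z} (moment_dens p) = I / 2"
    using I head z1 assms
    by (intro IVT' indefinite_integral_continuous_1 moment_dens_integrable_Icc) auto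
  then obtain z where z: "0 \<le> z" "integral {0..z} (moment_dens p) = I / 2" by blast
  with I have "z > 0" by (cases "z = 0") auto
  with z have "balance_point p z"
    using balance_point_iff_half[OF assms] unfolding I_def by simp
  then show ?thesis ..
qed

lemma balance_point_unique:
  assumes "0 < p" "p \<le> 1" "balance_point p z" "balance_point p w"
  shows "z = w"
proof (rule ccontr)
  assume "z \<noteq> w"
  then consider "z < w" | "w < z" by linarith
  then show False
    using assms partial_moment_strict_mono[of z w p] partial_moment_strict_mono[of w z p]
    unfolding balance_point_iff_half[OF assms(1,2)] by cases auto
qed

lemma zstar_balance_point:
  assumes "0 < p" "p \<le> 1"
  shows "balance_point p (zstar p)"
proof -
  have "zstar p = (THE z. balance_point p z)"
    unfolding zstar_def balance_point_def moment_dens_def by simp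
  then show ?thesis
    using theI'[of "balance_point p"] balance_point_exists[OF assms]
      balance_point_unique[OF assms] by metis
qed

text \<open>Beyond z the weight x^d exceeds z^d, strictly so on a set of positive measure:
  weighting the tail by x^d gains strictly more than the constant factor z^d.\<close>
lemma weighted_tail_gain:
  assumes "0 < z" "0 < d" "0 < p" "p + d \<le> 1"
  shows "z powr d * integral {z..} (moment_dens p) < integral {z..} (moment_dens (p + d))"
proof -
  define h where "h x = moment_dens (p + d) x - z powr d * moment_dens p x" for x
  have h_eq: "h x = (x powr d - z powr d) * moment_dens p x" for x
    unfolding h_def moment_dens_shift by (simp add: algebra_simps)
  have int_p: "moment_dens p integrable_on {z..}" and int_q: "moment_dens (p + d) integrable_on {z..}"
    using assms by (auto intro!: moment_dens_integrable)
  then have int_h: "h integrable_on {z..}"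
    unfolding h_def by (intro integrable_diff integrable_on_mult_right)
  have h_pos: "h x > 0" if "z < x" for x
    unfolding h_eq using that assms moment_dens_pos[of x p]
    by (intro mult_pos_pos) (auto intro: powr_less_mono2)
  have h_nonneg: "h x \<ge> 0" if "z \<le> x" for x
    using h_pos[of x] that by (cases "x = z") (auto simp: h_eq)
  have "integral {z..z+1} h > 0"
  proof (rule integral_pos_if_pos_inside)
    have "continuous_on {z..z+1} (\<lambda>x. x powr d)"
      using assms by (intro continuous_on_powr') (auto intro!: continuous_intros)
    then show "continuous_on {z..z+1} h"
      unfolding h_eq using assms
      by (auto intro!: continuous_intros continuous_on_subset[OF moment_dens_continuous])
  qed (use h_pos in auto)
  also have "integral {z..z+1} h \<le> integral {z..} h"
    using int_h h_nonneg by (intro integral_subset_le integrable_on_subinterval[OF int_h]) auto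
  also have "integral {z..} h
               = integral {z..} (moment_dens (p + d)) - z powr d * integral {z..} (moment_dens p)"
    unfolding h_def using int_q int_p by (simp add: integral_diff integrable_on_mult_right)
  finally show ?thesis by simp
qed

text \<open>At the balance point of p, the q-th moment (q > p) is tail-heavy: its head is at
  most z^(q-p) times the p-head, which equals z^(q-p) times the p-tail, which is less
  than the q-tail.\<close>
lemma balance_point_tail_heavy:
  assumes "0 < p" "p < q" "q \<le> 1" "balance_point p z"
  shows "integral {0..z} (moment_dens q) < integral {z..} (moment_dens q)"
proof -
  define d where "d = q - p"
  have d: "0 < d" "q = p + d" unfolding d_def using assms by auto
  have z: "z > 0" using assms(4) unfolding balance_point_def by simp
  have "integral {0..z} (moment_dens q) \<le> integral {0..z} (\<lambda>x. z powr d * moment_dens p x)"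
  proof (rule integral_le)
    show "moment_dens q integrable_on {0..z}"
      using assms by (intro moment_dens_integrable_Icc) auto
    show "(\<lambda>x. z powr d * moment_dens p x) integrable_on {0..z}"
      using assms by (intro integrable_on_mult_right moment_dens_integrable_Icc) auto
    show "moment_dens q x \<le> z powr d * moment_dens p x" if "x \<in> {0..z}" for x
      unfolding d(2) moment_dens_shift using that d moment_dens_nonneg[of p x]
      by (intro mult_right_mono powr_mono2) auto
  qed
  also have "\<dots> = z powr d * integral {z..} (moment_dens p)"
    using assms(4) unfolding balance_point_def by simp
  also have "\<dots> < integral {z..} (moment_dens q)"
    unfolding d(2) using weighted_tail_gain[of z d p] z d assms by simp
  finally show ?thesis .
qed

lemma zstar_strict_mono:
  assumes "0 < p" "p < q" "q \<le> 1"
  shows "zstar p < zstar q"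
proof (rule ccontr)
  define z w where "z = zstar p" and "w = zstar q"
  assume "\<not> zstar p < zstar q"
  then have wz: "w \<le> z" unfolding z_def w_def by simp
  have bz: "balance_point p z" and bw: "balance_point q w"
    unfolding z_def w_def using assms by (auto intro!: zstar_balance_point)
  have "integral {0..w} (moment_dens q) \<le> integral {0..z} (moment_dens q)"
    using wz bw assms partial_moment_strict_mono[of w z q]
    by (cases "w = z") (auto simp: balance_point_def)
  then have "integral {z..} (moment_dens q) \<le> integral {0..z} (moment_dens q)"
    using bw bz assms moment_integral_split[of z q] moment_integral_split[of w q]
    unfolding balance_point_def by linarith
  then show False
    using balance_point_tail_heavy[OF assms bz] by linarith
qed

lemma erf_strict_mono:
  assumes "0 \<le> a" "a < b"
  shows "erf a < erf b"
proof -
  define e where "e t = exp (- (t\<^sup>2))" for t :: real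
  have cont: "continuous_on {u..v} e" for u v
    unfolding e_def by (auto intro!: continuous_intros)
  have "integral {0..b} e = integral {0..a} e + integral {a..b} e"
    using assms cont by (intro Henstock_Kurzweil_Integration.integral_combine[symmetric]
        integrable_continuous_interval) auto
  moreover have "integral {a..b} e > 0"
    using assms cont by (intro integral_pos_if_pos_inside) (auto simp: e_def)
  ultimately have "integral {0..a} e < integral {0..b} e" by simp
  then show ?thesis unfolding erf_def e_def by (simp add: divide_strict_right_mono)
qed

theorem proposition1:
  shows "strict_antimono_on {0<..1} rhostar"
proof (rule monotone_onI)
  fix p q :: real
  assume "p \<in> {0<..1}" "q \<in> {0<..1}" "p < q"
  then have pq: "0 < p" "p < q" "q \<le> 1" by auto
  have "0 < zstar p"
    using zstar_balance_point[of p] pq unfolding balance_point_def by auto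
  moreover have "zstar p < zstar q" by (rule zstar_strict_mono[OF pq])
  ultimately have "erf (zstar p / sqrt 2) < erf (zstar q / sqrt 2)"
    by (intro erf_strict_mono) (auto simp: divide_strict_right_mono)
  then show "rhostar q < rhostar p" unfolding rhostar_def by simp
qed

end
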